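(* Let $A\in\mathbb{R}^{m\times n}$ with $m<n$, let $B$ be a matrix whose columns form a basis of the null space of $A$, let $T\subseteq\{1,\dots,n\}$ and let $\sigma\in\{-1,+1\}^T$ be a fixed sign pattern. Then every $\mathbf{x}\in\mathbb{R}^n$ with support exactly $T$ and $\operatorname{sgn}(x_i)=\sigma_i$ for $i\in T$ is the unique solution of the $\ell_0$-minimization problem $\min\{\|\mathbf{v}\|_0 : A\mathbf{v}=A\mathbf{x}\}$ if and only if $$\|B_{T^-}\mathbf{z}\|_0<\|B_{T^c}\mathbf{z}\|_0$$ for every nonzero vector $\mathbf{z}$, where $T^-=\{i\in T:(B\mathbf{z})_i\sigma_i<0\}$.
   Context: $\|\mathbf{v}\|_0=|\{i:v_i\neq0\}|$. For an index set $S$, $B_S$ is the submatrix of $B$ formed by rows indexed by $S$; $T^c=\{1,\dots,n\}\setminus T$. *)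

theory Defs
  imports "HOL-Analysis.Analysis"
begin

definition l0 :: "real ^ 'n \<Rightarrow> nat" where
  "l0 v = card {i. v $ i \<noteq> 0}"

text \<open>l0 norm of the subvector of v indexed by S (i.e. of the rows of B z indexed by S).\<close>
definition l0_sub :: "'n set \<Rightarrow> real ^ 'n \<Rightarrow> nat" where
  "l0_sub S v = card {i \<in> S. v $ i \<noteq> 0}"

end

theory Submission
  imports Defs
begin

(* Write x + w for a competitor of x in the affine solution set {v. A v = A x}; then w
   ranges over the null space of A, which the hypotheses on B identify bijectively with
   the vectors B z (nonzero w corresponding to nonzero z).

   Counting: for x with support T and signs \<sigma>, a coordinate i \<in> T can only vanish in
   x + w if w_i has sign opposite to \<sigma>_i, i.e. i \<in> T-minus; outside T, x + w agrees with w.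
   This gives the lower bound  |T| + |w_{T^c}|_0 \<le> |x + w|_0 + |w_{T-minus}|_0  for every
   such x, and the bound is attained by the x that cancels w exactly on T-minus. *)

definition sign_pattern :: "'n set \<Rightarrow> ('n \<Rightarrow> real) \<Rightarrow> real ^ 'n \<Rightarrow> bool" where
  "sign_pattern T \<sigma> x \<longleftrightarrow> {i. x $ i \<noteq> 0} = T \<and> (\<forall>i\<in>T. sgn (x $ i) = \<sigma> i)"

text \<open>The set T-minus of indices in T where w has sign opposite to \<sigma>: the only places
  where adding w to a vector with sign pattern \<sigma> can create a zero.\<close>
definition sign_conflicts :: "'n set \<Rightarrow> ('n \<Rightarrow> real) \<Rightarrow> real ^ 'n \<Rightarrow> 'n set" where
  "sign_conflicts T \<sigma> w = {i \<in> T. w $ i * \<sigma> i < 0}"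

lemma axes_eq_Basis: "range (\<lambda>i. axis i (1::real)) = (Basis :: (real ^ 'n) set)"
  by (auto simp: Basis_vec_def)

lemma column_space_eq_range:
  fixes B :: "real ^ 'k ^ 'n"
  shows "span (columns B) = range ((*v) B)"
proof -
  have "span (columns B) = (*v) B ` span (range (\<lambda>i. axis i 1))"
    by (simp add: columns_image_basis span_linear_image)
  also have "\<dots> = range ((*v) B)"
    by (simp add: axes_eq_Basis)
  finally show ?thesis .
qed

text \<open>Distinct, linearly independent columns make z \<mapsto> B z injective: the standard basis
  is mapped injectively onto an independent set, hence the map is injective on its span.\<close>
lemma inj_matrix_vector_mult:
  fixes B :: "real ^ 'k ^ 'n"
  assumes inj: "inj (\<lambda>j. column j B)" and ind: "independent (columns B)"
  shows "inj ((*v) B)"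
proof -
  have "inj_on ((*v) B) (range (\<lambda>i. axis i 1))"
    using inj by (auto simp: inj_on_def inj_def matrix_vector_mult_basis axis_eq_axis)
  moreover have "independent ((*v) B ` range (\<lambda>i. axis i 1))"
    using ind by (simp add: columns_image_basis)
  ultimately have "inj_on ((*v) B) (span (range (\<lambda>i. axis i (1::real))))"
    by (intro linear_inj_on_span_independent_image) auto
  then show ?thesis
    by (simp add: axes_eq_Basis)
qed

lemma l0_split: "l0 v = l0_sub S v + l0_sub (UNIV - S) v"
proof -
  have "{i. v $ i \<noteq> 0} = {i \<in> S. v $ i \<noteq> 0} \<union> {i \<in> UNIV - S. v $ i \<noteq> 0}"
    by auto
  then show ?thesis
    unfolding l0_def l0_sub_def by (simp add: card_Un_disjoint disjoint_iff)
qed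

lemma card_split_zeros: "card S = l0_sub S v + card {i \<in> S. v $ i = 0}"
  for S :: "'n::finite set"
proof -
  have "card S = card ({i \<in> S. v $ i \<noteq> 0} \<union> {i \<in> S. v $ i = 0})"
    by (rule arg_cong[where f = card]) auto
  also have "\<dots> = l0_sub S v + card {i \<in> S. v $ i = 0}"
    unfolding l0_sub_def by (rule card_Un_disjoint) auto
  finally show ?thesis .
qed

lemma l0_sign_pattern: "sign_pattern T \<sigma> x \<Longrightarrow> l0 x = card T"
  by (simp add: sign_pattern_def l0_def)

lemma l0_sub_outside_support:
  assumes "{i. x $ i \<noteq> 0} = T"
  shows "l0_sub (UNIV - T) (x + w) = l0_sub (UNIV - T) w"
proof -
  have "{i \<in> UNIV - T. (x + w) $ i \<noteq> 0} = {i \<in> UNIV - T. w $ i \<noteq> 0}"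
    using assms by auto
  then show ?thesis
    by (simp add: l0_sub_def)
qed

text \<open>Lower bound: a zero of x + w inside T lies in T-minus, so perturbing x by w removes
  at most |w_{T-minus}|_0 entries from T and adds exactly |w_{T^c}|_0 entries outside T.\<close>
lemma perturbation_lower_bound:
  assumes x: "sign_pattern T \<sigma> x"
  shows "card T + l0_sub (UNIV - T) w \<le> l0 (x + w) + l0_sub (sign_conflicts T \<sigma> w) w"
proof -
  have "{i \<in> T. (x + w) $ i = 0} \<subseteq> {i \<in> sign_conflicts T \<sigma> w. w $ i \<noteq> 0}"
  proof
    fix i assume i: "i \<in> {i \<in> T. (x + w) $ i = 0}"
    then have xi: "x $ i \<noteq> 0" "sgn (x $ i) = \<sigma> i" and wi: "w $ i = - x $ i"
      using x by (auto simp: sign_pattern_def eq_neg_iff_add_eq_0 add.commute)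
    have "w $ i * \<sigma> i = - (x $ i * sgn (x $ i))"
      using wi xi by simp
    also have "\<dots> < 0"
      using xi(1) by (simp add: sgn_if)
    finally show "i \<in> {i \<in> sign_conflicts T \<sigma> w. w $ i \<noteq> 0}"
      using i xi wi by (auto simp: sign_conflicts_def)
  qed
  then have "card {i \<in> T. (x + w) $ i = 0} \<le> l0_sub (sign_conflicts T \<sigma> w) w"
    unfolding l0_sub_def by (rule card_mono[rotated]) simp
  moreover have "l0_sub (UNIV - T) (x + w) = l0_sub (UNIV - T) w"
    using x by (intro l0_sub_outside_support) (simp add: sign_pattern_def)
  ultimately show ?thesis
    using card_split_zeros[of T "x + w"] l0_split[of "x + w" T] by linarith
qed

text \<open>The lower bound is attained: with \<sigma> a genuine sign vector, choose x = -w on T-minus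
  and x = \<sigma> on the rest of T; then x + w vanishes on all of T-minus.\<close>
lemma perturbation_extremal:
  fixes w :: "real ^ 'n"
  assumes sigma: "\<forall>i\<in>T. \<sigma> i \<in> {-1, 1}"
  obtains x where "sign_pattern T \<sigma> x"
    and "l0 (x + w) + l0_sub (sign_conflicts T \<sigma> w) w \<le> card T + l0_sub (UNIV - T) w"
proof
  define Tm where "Tm = sign_conflicts T \<sigma> w"
  define x :: "real ^ 'n" where
    "x = (\<chi> i. if i \<in> Tm then - (w $ i) else if i \<in> T then \<sigma> i else 0)"
  have support: "{i. x $ i \<noteq> 0} = T"
    using sigma by (auto simp: x_def Tm_def sign_conflicts_def)
  have "sgn (x $ i) = \<sigma> i" if i: "i \<in> T" for i
  proof -
    have "\<sigma> i = -1 \<or> \<sigma> i = 1"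
      using sigma i by auto
    then show ?thesis
      using i by (auto simp: x_def Tm_def sign_conflicts_def sgn_if mult_less_0_iff)
  qed
  with support show x: "sign_pattern T \<sigma> x"
    by (simp add: sign_pattern_def)
  have Tm_sub: "Tm \<subseteq> T"
    by (auto simp: Tm_def sign_conflicts_def)
  have "{i \<in> T. (x + w) $ i \<noteq> 0} \<subseteq> T - Tm"
    by (auto simp: x_def)
  then have "l0_sub T (x + w) \<le> card (T - Tm)"
    unfolding l0_sub_def by (rule card_mono[rotated]) simp
  also have "\<dots> = card T - card Tm"
    using Tm_sub by (simp add: card_Diff_subset finite_subset)
  finally have "l0_sub T (x + w) \<le> card T - card Tm" .
  moreover have "l0_sub Tm w = card Tm"
    unfolding l0_sub_def by (rule arg_cong[where f = card]) (auto simp: Tm_def sign_conflicts_def)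
  moreover have "card Tm \<le> card T"
    using Tm_sub by (simp add: card_mono)
  moreover have "l0_sub (UNIV - T) (x + w) = l0_sub (UNIV - T) w"
    using support by (rule l0_sub_outside_support)
  ultimately show "l0 (x + w) + l0_sub (sign_conflicts T \<sigma> w) w \<le> card T + l0_sub (UNIV - T) w"
    using l0_split[of "x + w" T] unfolding Tm_def by linarith
qed

lemma sign_pattern_strict_sparsity_iff:
  fixes N :: "(real ^ 'n) set"
  assumes sigma: "\<forall>i\<in>T. \<sigma> i \<in> {-1, 1}"
  shows "(\<forall>x. sign_pattern T \<sigma> x \<longrightarrow> (\<forall>w\<in>N. w \<noteq> 0 \<longrightarrow> l0 x < l0 (x + w)))
     \<longleftrightarrow> (\<forall>w\<in>N. w \<noteq> 0 \<longrightarrow> l0_sub (sign_conflicts T \<sigma> w) w < l0_sub (UNIV - T) w)"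
proof (intro iffI ballI impI allI)
  fix w assume sparse: "\<forall>x. sign_pattern T \<sigma> x \<longrightarrow> (\<forall>w\<in>N. w \<noteq> 0 \<longrightarrow> l0 x < l0 (x + w))"
    and "w \<in> N" "w \<noteq> 0"
  obtain x where x: "sign_pattern T \<sigma> x" and extremal:
    "l0 (x + w) + l0_sub (sign_conflicts T \<sigma> w) w \<le> card T + l0_sub (UNIV - T) w"
    using perturbation_extremal[OF sigma] .
  have "l0 x < l0 (x + w)"
    using sparse x \<open>w \<in> N\<close> \<open>w \<noteq> 0\<close> by blast
  then show "l0_sub (sign_conflicts T \<sigma> w) w < l0_sub (UNIV - T) w"
    using extremal l0_sign_pattern[OF x] by linarith
next
  fix x w assume nsp: "\<forall>w\<in>N. w \<noteq> 0 \<longrightarrow> l0_sub (sign_conflicts T \<sigma> w) w < l0_sub (UNIV - T) w"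
    and x: "sign_pattern T \<sigma> x" and "w \<in> N" "w \<noteq> 0"
  then show "l0 x < l0 (x + w)"
    using perturbation_lower_bound[OF x, of w] l0_sign_pattern[OF x] by force
qed

text \<open>The competitors of x are the vectors x + w with w in the null space of A, and the
  null space is parametrised injectively by z \<mapsto> B z; so the theorem is the combinatorial
  core applied to N = range ((*v) B).\<close>
theorem theorem4:
  fixes A :: "real ^ 'n ^ 'm" and B :: "real ^ 'k ^ 'n"
    and T :: "'n set" and \<sigma> :: "'n \<Rightarrow> real"
  assumes mn: "CARD('m) < CARD('n)"
    and B_inj: "inj (\<lambda>j. column j B)"
    and B_indep: "independent (columns B)"
    and B_span: "span (columns B) = {v. A *v v = 0}"
    and sigma: "\<forall>i\<in>T. \<sigma> i \<in> {-1, 1}"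
  shows "(\<forall>x :: real ^ 'n. {i. x $ i \<noteq> 0} = T \<and> (\<forall>i\<in>T. sgn (x $ i) = \<sigma> i) \<longrightarrow>
            (\<forall>v. A *v v = A *v x \<and> v \<noteq> x \<longrightarrow> l0 x < l0 v))
      \<longleftrightarrow>
         (\<forall>z :: real ^ 'k. z \<noteq> 0 \<longrightarrow>
            l0_sub {i \<in> T. (B *v z) $ i * \<sigma> i < 0} (B *v z) < l0_sub (UNIV - T) (B *v z))"
proof -
  let ?N = "range ((*v) B)"
  have kernel: "A *v w = 0 \<longleftrightarrow> w \<in> ?N" for w
    using B_span column_space_eq_range by blast
  have B_zero: "B *v z = 0 \<longleftrightarrow> z = 0" for z
    using inj_matrix_vector_mult[OF B_inj B_indep] by (metis injD matrix_vector_mult_0_right)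
  have competitors: "(\<forall>v. A *v v = A *v x \<and> v \<noteq> x \<longrightarrow> l0 x < l0 v)
      \<longleftrightarrow> (\<forall>w\<in>?N. w \<noteq> 0 \<longrightarrow> l0 x < l0 (x + w))" for x
  proof -
    have "A *v v = A *v x \<longleftrightarrow> v - x \<in> ?N" for v
      using kernel[of "v - x"] by (simp add: matrix_vector_mult_diff_distrib)
    then show ?thesis
      by (metis add_diff_cancel_left' diff_add_cancel right_minus_eq)
  qed
  have "(\<forall>w\<in>?N. w \<noteq> 0 \<longrightarrow> l0_sub (sign_conflicts T \<sigma> w) w < l0_sub (UNIV - T) w)
      \<longleftrightarrow> (\<forall>z. z \<noteq> 0 \<longrightarrow>
            l0_sub (sign_conflicts T \<sigma> (B *v z)) (B *v z) < l0_sub (UNIV - T) (B *v z))"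
    using B_zero by auto
  then show ?thesis
    using sign_pattern_strict_sparsity_iff[OF sigma, of ?N] competitors
    unfolding sign_pattern_def sign_conflicts_def by simp
qed

end
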